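(* Let $k=2$, and let $p_{1j},p_{2j}\in[0,1]$ with $p_{1j}+p_{2j}=1$ for $j=1,\dots,N$, not all $p_{1j}$ equal. Let $r_1,\dots,r_N$ be any ranks (a permutation of $\{1,\dots,N\}$). With $R^*_i=\sum_j p_{ij}r_j$, $\bar p_i=N^{-1}\sum_j p_{ij}$ and $\tilde\sigma_i^2=\frac{N(N+1)}{12}\sum_j(p_{ij}-\bar p_i)^2$, one has $$\frac{R^*_1-\frac{N+1}{2}\sum_{j=1}^Np_{1j}}{\tilde\sigma_1}=-\frac{R^*_2-\frac{N+1}{2}\sum_{j=1}^Np_{2j}}{\tilde\sigma_2}.$$ Consequently, the two-sample generalized Kruskal--Wallis statistic $$H^*=\Big(R^*_i-\frac{N+1}{2}\sum_{j=1}^Np_{ij}\Big)^2\Big/\tilde\sigma_i^2$$ does not depend on the choice $i\in\{1,2\}$, and under the hypotheses of the two-sample asymptotic normality result (the rank vector uniform over permutations of $\{1,\dots,N\}$, and for the fixed sequence $(p_{1j})_{j\ge1}$: $\bar p_1\to\pi_1\in(0,1)$ and $N^{-1}\sum_{j}(p_{1j}-\bar p_1)^2\to\nu_1>0$) $H^*$ converges in distribution to $\chi^2(1)$.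
   Context: $p_{ij}=P(G_j=i)$ is the probability that observation $j$ belongs to group $i$; $r_j$ is the rank of $Y_j$ in the pooled sample of size $N$; $R^*_i$ is the probability-weighted rank-sum of group $i$. *)

theory Defs
  imports "HOL-Probability.Probability" "HOL-Combinatorics.Permutations"
begin

definition Rstar :: "(nat \<Rightarrow> real) \<Rightarrow> (nat \<Rightarrow> nat) \<Rightarrow> nat \<Rightarrow> real" where
  "Rstar p r N = (\<Sum>j=1..N. p j * real (r j))"

definition pbar :: "(nat \<Rightarrow> real) \<Rightarrow> nat \<Rightarrow> real" where
  "pbar p N = (\<Sum>j=1..N. p j) / real N"

definition sigma2 :: "(nat \<Rightarrow> real) \<Rightarrow> nat \<Rightarrow> real" where
  "sigma2 p N = real N * (real N + 1) / 12 * (\<Sum>j=1..N. (p j - pbar p N)^2)"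

definition centered :: "(nat \<Rightarrow> real) \<Rightarrow> (nat \<Rightarrow> nat) \<Rightarrow> nat \<Rightarrow> real" where
  "centered p r N = Rstar p r N - (real N + 1) / 2 * (\<Sum>j=1..N. p j)"

definition Hstar :: "(nat \<Rightarrow> real) \<Rightarrow> (nat \<Rightarrow> nat) \<Rightarrow> nat \<Rightarrow> real" where
  "Hstar p r N = (centered p r N)^2 / sigma2 p N"

definition rank_law :: "nat \<Rightarrow> (nat \<Rightarrow> nat) measure" where
  "rank_law N = measure_pmf (pmf_of_set {\<sigma>. \<sigma> permutes {1..N}})"

definition chi2_1 :: "real measure" where
  "chi2_1 = distr std_normal_distribution borel (\<lambda>x. x^2)"

end

theory Submission
  imports Defs
begin

text \<open>
  The first claim is pure algebra: with complementary weights \<open>p\<^sub>2 = 1 - p\<^sub>1\<close>, the ranks summing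
  to \<open>N(N+1)/2\<close> make the centred weighted rank sums opposite and the normalisers equal, so
  \<open>H*\<close> does not depend on the group.

  The second claim is a central limit theorem for \<open>T = (R* - (N+1)/2 \<Sum> p\<^sub>j)/\<sigma>\<close> under the uniform
  law on permutations, followed by the continuous mapping \<open>x \<mapsto> x\<^sup>2\<close>. We follow H\'ajek's
  projection method:
  \<^item> a uniform random permutation is the rank vector of \<open>N\<close> independent uniforms (transfer lemma
    \<open>integral_rank_law\<close>);
  \<^item> for such a rank vector the centred statistic splits into a linear part, a weighted sum of
    independent centred uniforms, plus a remainder built from a kernel that is centred in
    each argument (\<open>centered_hajek_decomposition\<close>);
  \<^item> the remainder terms are pairwise orthogonal except for mirror pairs, so \<open>E|R| = O(N)\<close>,
    negligible against \<open>\<sigma> \<asymp> N\<^sup>3\<^sup>/\<^sup>2\<close>;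
  \<^item> the characteristic function of the linear part factorises and is compared with the
    Gaussian one factor by factor (\<open>char_standardised_rank_sum\<close>);
  \<^item> L\'evy's continuity theorem gives \<open>T \<Rightarrow> N(0,1)\<close>, hence \<open>H* = T\<^sup>2 \<Rightarrow> \<chi>\<^sup>2(1)\<close>.
\<close>

section \<open>The two-sample symmetry\<close>

text \<open>The only input about the ranks is that they sum to \<open>N(N+1)/2\<close>.\<close>

lemma sum_of_ranks:
  assumes "bij_betw r {1..N} {1..(N::nat)}"
  shows "(\<Sum>j=1..N. real (r j)) = real N * (real N + 1) / 2"
proof -
  have gauss: "(\<Sum>i=1..n. real i) = real n * (real n + 1) / 2" for n :: nat
    by (induction n) (auto simp: field_simps)
  have "(\<Sum>j=1..N. real (r j)) = (\<Sum>i=1..N. real i)"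
    using sum.reindex_bij_betw[OF assms, of real] by (simp add: comp_def)
  then show ?thesis using gauss by simp
qed

lemma centered_complement:
  assumes comp: "\<And>j. j \<in> {1..N} \<Longrightarrow> p2 j = 1 - p1 j"
    and r: "bij_betw r {1..N} {1..(N::nat)}"
  shows "centered p2 r N = - centered p1 r N"
proof -
  have R2: "Rstar p2 r N = real N * (real N + 1) / 2 - Rstar p1 r N"
    unfolding sum_of_ranks[OF r, symmetric] Rstar_def sum_subtractf[symmetric]
    by (rule sum.cong) (auto simp: comp algebra_simps)
  have S2: "(\<Sum>j=1..N. p2 j) = real N - (\<Sum>j=1..N. p1 j)"
    by (simp add: comp sum_subtractf)
  show ?thesis
    unfolding centered_def R2 S2 by (simp add: algebra_simps)
qed

lemma sigma2_complement:
  assumes comp: "\<And>j. j \<in> {1..N} \<Longrightarrow> p2 j = 1 - p1 j"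
  shows "sigma2 p2 N = sigma2 p1 N"
proof (cases "N = 0")
  case False
  have "pbar p2 N = 1 - pbar p1 N"
    using False by (simp add: pbar_def comp sum_subtractf field_simps)
  then have "(\<Sum>j=1..N. (p2 j - pbar p2 N)^2) = (\<Sum>j=1..N. (p1 j - pbar p1 N)^2)"
    by (intro sum.cong) (auto simp: comp power2_commute)
  then show ?thesis unfolding sigma2_def by simp
qed (simp add: sigma2_def)

lemma Hstar_complement:
  assumes "\<And>j. j \<in> {1..N} \<Longrightarrow> p2 j = 1 - p1 j" and "bij_betw r {1..N} {1..(N::nat)}"
  shows "Hstar p2 r N = Hstar p1 r N"
  unfolding Hstar_def using centered_complement[OF assms] sigma2_complement[OF assms(1)] by simp

section \<open>The uniform product model\<close>

text \<open>A uniformly distributed rank vector is realised as the ranks of \<open>N\<close> independent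
  uniform variables on \<open>[0,1]\<close>.\<close>

definition unif :: "real measure" where
  "unif = restrict_space lborel {0..1}"

definition unif_vec :: "nat \<Rightarrow> (nat \<Rightarrow> real) measure" where
  "unif_vec N = PiM {1..N} (\<lambda>_. unif)"

lemma space_unif [simp]: "space unif = {0..1}"
  by (simp add: unif_def space_restrict_space)

lemma prob_space_unif: "prob_space unif"
proof
  show "emeasure unif (space unif) = 1"
    unfolding unif_def by (subst emeasure_restrict_space) (auto simp: space_restrict_space)
qed

interpretation unif: prob_space unif by (rule prob_space_unif)

interpretation unif_prod: product_sigma_finite "\<lambda>_::nat. unif"
  unfolding product_sigma_finite_def using unif.sigma_finite_measure_axioms by blast

lemma prob_space_unif_vec: "prob_space (unif_vec N)"
  unfolding unif_vec_def by (rule prob_space_PiM) (rule prob_space_unif)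

lemma integrable_unif_cont:
  fixes f :: "real \<Rightarrow> 'b::{banach, second_countable_topology}"
  assumes "continuous_on {0..1} f"
  shows "integrable unif f"
  unfolding unif_def by (subst integrable_restrict_space) (auto intro!: borel_integrable_compact assms)

lemma integrable_unif_bounded:
  fixes f :: "real \<Rightarrow> 'b::{banach, second_countable_topology}"
  assumes "f \<in> borel_measurable borel" "\<And>x. x \<in> {0..1} \<Longrightarrow> norm (f x) \<le> B"
  shows "integrable unif f"
proof -
  have "f \<in> borel_measurable unif"
    unfolding unif_def by (rule measurable_restrict_space1) (simp add: assms(1))
  then show ?thesis by (auto intro!: unif.integrable_const_bound[where B=B] AE_I2 assms)
qed

lemma measure_unif_space [simp]: "measure unif {0..1} = 1"
  using unif.prob_space by simp

lemma integral_unif_const [simp]: "integral\<^sup>L unif (\<lambda>x. c) = (c::real)"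
  by simp

lemma integral_unif_lborel: "integral\<^sup>L unif f = (\<integral>x. f x * indicator {0..1} x \<partial>lborel)"
  for f :: "real \<Rightarrow> real"
  unfolding unif_def by (subst integral_restrict_space) (auto simp: mult.commute)

lemma integral_unif_power: "integral\<^sup>L unif (\<lambda>x. x^k) = 1 / (real k + 1)"
  unfolding integral_unif_lborel using integral_power[of 0 1 k] by simp

lemma integral_unif_id: "integral\<^sup>L unif (\<lambda>x. x) = 1/2"
  using integral_unif_power[of 1] by simp

lemma integral_unif_interval:
  assumes "0 \<le> a" "a \<le> b" "b \<le> 1"
    and f: "\<And>y. y \<in> {0..1} \<Longrightarrow> f y = (if a \<le> y \<and> y \<le> b then 1 else 0)"
  shows "integral\<^sup>L unif f = b - a"
proof -
  have "(\<lambda>x. f x * indicator {0..1} x) = (\<lambda>x. x^0 * indicator {a..b} x :: real)"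
    using assms by (auto simp: indicator_def fun_eq_iff f)
  then show ?thesis unfolding integral_unif_lborel using integral_power[of a b 0] assms by simp
qed

lemma integral_unif_vec_vanishing_coordinate:
  fixes f :: "(nat \<Rightarrow> real) \<Rightarrow> real"
  assumes i: "i \<in> {1..N}" and f: "integrable (unif_vec N) f"
    and z: "\<And>x. x \<in> space (PiM ({1..N} - {i}) (\<lambda>_. unif)) \<Longrightarrow> integral\<^sup>L unif (\<lambda>y. f (x(i:=y))) = 0"
  shows "integral\<^sup>L (unif_vec N) f = 0"
proof -
  have I: "insert i ({1..N} - {i}) = {1..N}" using i by blast
  have "integral\<^sup>L (unif_vec N) f = integral\<^sup>L (PiM (insert i ({1..N} - {i})) (\<lambda>_. unif)) f"
    unfolding I unif_vec_def ..
  also have "\<dots> = (\<integral>x. (\<integral>y. f (x(i:=y)) \<partial>unif) \<partial>PiM ({1..N} - {i}) (\<lambda>_. unif))"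
    by (rule unif_prod.product_integral_insert) (use f in \<open>simp_all only: I unif_vec_def, auto\<close>)
  also have "\<dots> = (\<integral>x. 0 \<partial>PiM ({1..N} - {i}) (\<lambda>_. unif))"
    by (rule Bochner_Integration.integral_cong[OF refl z])
  finally show ?thesis by simp
qed

lemma coordinate_measurable:
  "a \<in> {1..N} \<Longrightarrow> (\<lambda>x. x a) \<in> borel_measurable (unif_vec N)"
  unfolding unif_vec_def
  by (rule measurable_compose[OF measurable_component_singleton], assumption)
     (simp add: unif_def measurable_restrict_space1)

lemma coordinate_range: "x \<in> space (PiM J (\<lambda>_. unif)) \<Longrightarrow> a \<in> J \<Longrightarrow> x a \<in> {0..1}"
  unfolding space_PiM by auto

lemma integrable_unif_vec_bounded:
  fixes f :: "(nat \<Rightarrow> real) \<Rightarrow> 'b::{banach, second_countable_topology}"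
  assumes "f \<in> borel_measurable (unif_vec N)" "\<And>x. x \<in> space (unif_vec N) \<Longrightarrow> norm (f x) \<le> B"
  shows "integrable (unif_vec N) f"
proof -
  interpret prob_space "unif_vec N" by (rule prob_space_unif_vec)
  show ?thesis by (rule integrable_const_bound[where B=B]) (auto intro!: AE_I2 assms)
qed

section \<open>The H\'ajek kernel\<close>

text \<open>For independent uniforms \<open>U, V\<close>, the indicator \<open>[U \<le> V]\<close> has conditional means
  \<open>V\<close> given \<open>V\<close> and \<open>1 - U\<close> given \<open>U\<close>. Subtracting both projections leaves a kernel that is
  centred in each argument separately; this is what makes the rank statistic nearly linear.\<close>

definition hajek_kernel :: "real \<Rightarrow> real \<Rightarrow> real" where
  "hajek_kernel a b = (if a \<le> b then 1 else 0) - b + a - 1/2"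

lemma hajek_kernel_bound: "a \<in> {0..1} \<Longrightarrow> b \<in> {0..1} \<Longrightarrow> \<bar>hajek_kernel a b\<bar> \<le> 3/2"
  unfolding hajek_kernel_def by (auto simp: abs_if)

lemma hajek_kernel_mean_first:
  assumes b: "b \<in> {0..1}"
  shows "integral\<^sup>L unif (\<lambda>y. hajek_kernel y b) = 0"
proof -
  have "integral\<^sup>L unif (\<lambda>y. if y \<le> b then 1 else 0) = b - 0"
    by (rule integral_unif_interval) (use b in auto)
  moreover have "integral\<^sup>L unif (\<lambda>y. hajek_kernel y b)
      = integral\<^sup>L unif (\<lambda>y. if y \<le> b then 1 else 0) - b + integral\<^sup>L unif (\<lambda>y. y) - 1/2"
    unfolding hajek_kernel_def
    by (simp add: integrable_unif_bounded[where B=1] integrable_unif_cont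
        Bochner_Integration.integral_diff Bochner_Integration.integral_add)
  ultimately show ?thesis using integral_unif_id by simp
qed

lemma hajek_kernel_mean_second:
  assumes a: "a \<in> {0..1}"
  shows "integral\<^sup>L unif (\<lambda>y. hajek_kernel a y) = 0"
proof -
  have "integral\<^sup>L unif (\<lambda>y. if a \<le> y then 1 else 0) = 1 - a"
    by (rule integral_unif_interval) (use a in auto)
  moreover have "integral\<^sup>L unif (\<lambda>y. hajek_kernel a y)
      = integral\<^sup>L unif (\<lambda>y. if a \<le> y then 1 else 0) - integral\<^sup>L unif (\<lambda>y. y) + a - 1/2"
    unfolding hajek_kernel_def
    by (simp add: integrable_unif_bounded[where B=1] integrable_unif_cont
        Bochner_Integration.integral_diff Bochner_Integration.integral_add)
  ultimately show ?thesis using integral_unif_id by simp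
qed

lemma coordinate_comparisons_measurable:
  assumes "a \<in> {1..N}" "b \<in> {1..N}"
  shows "(\<lambda>x. if x a \<le> x b then 1 else 0::real) \<in> borel_measurable (unif_vec N)"
    and "(\<lambda>x. if x a = x b then 1 else 0::real) \<in> borel_measurable (unif_vec N)"
    and "(\<lambda>x. hajek_kernel (x a) (x b)) \<in> borel_measurable (unif_vec N)"
proof -
  note [measurable] = coordinate_measurable[OF assms(1)] coordinate_measurable[OF assms(2)]
  show "(\<lambda>x. if x a \<le> x b then 1 else 0::real) \<in> borel_measurable (unif_vec N)"
    and "(\<lambda>x. if x a = x b then 1 else 0::real) \<in> borel_measurable (unif_vec N)"
    and "(\<lambda>x. hajek_kernel (x a) (x b)) \<in> borel_measurable (unif_vec N)"
    unfolding hajek_kernel_def by measurable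
qed

section \<open>Ranks of independent uniforms are uniformly distributed\<close>

abbreviation perms :: "nat \<Rightarrow> (nat \<Rightarrow> nat) set" where
  "perms N \<equiv> {\<sigma>. \<sigma> permutes {1..N}}"

definition rank_vec :: "nat \<Rightarrow> (nat \<Rightarrow> real) \<Rightarrow> nat \<Rightarrow> nat" where
  "rank_vec N u j = (if j \<in> {1..N} then (\<Sum>k\<in>{1..N}. if u k \<le> u j then 1 else 0) else j)"

lemma real_rank_vec:
  "j \<in> {1..N} \<Longrightarrow> real (rank_vec N u j) = (\<Sum>k\<in>{1..N}. if u k \<le> u j then 1 else 0)"
  by (simp add: rank_vec_def of_nat_sum if_distrib cong: if_cong)

lemma rank_vec_outside: "j \<notin> {1..N} \<Longrightarrow> rank_vec N u j = j"
  unfolding rank_vec_def by (rule if_not_P)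

text \<open>Without ties the ranks form a permutation: they are strictly monotone in \<open>u\<close>,
  hence injective, and they take values in \<open>{1..N}\<close>.\<close>

lemma rank_vec_permutes:
  assumes inj: "inj_on u {1..N}"
  shows "rank_vec N u permutes {1..N}"
proof -
  let ?I = "{1..N}"
  have range: "rank_vec N u j \<in> ?I" if j: "j \<in> ?I" for j
  proof -
    have "(if u j \<le> u j then 1 else 0::nat) \<le> (\<Sum>k\<in>?I. if u k \<le> u j then 1 else 0)"
      by (rule member_le_sum[OF j]) auto
    moreover have "(\<Sum>k\<in>?I. if u k \<le> u j then 1 else 0::nat) \<le> (\<Sum>k\<in>?I. 1)"
      by (rule sum_mono) auto
    ultimately show ?thesis using j by (simp add: rank_vec_def)
  qed
  have strict_mono: "rank_vec N u j < rank_vec N u k" if j: "j \<in> ?I" and k: "k \<in> ?I" and "u j < u k" for j k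
  proof -
    have "(\<Sum>l\<in>?I. if u l \<le> u j then 1 else 0::nat) < (\<Sum>l\<in>?I. if u l \<le> u k then 1 else 0)"
    proof (rule sum_strict_mono_ex1)
      show "\<forall>l\<in>?I. (if u l \<le> u j then 1 else 0::nat) \<le> (if u l \<le> u k then 1 else 0)"
        using \<open>u j < u k\<close> by auto
      show "\<exists>l\<in>?I. (if u l \<le> u j then 1 else 0::nat) < (if u l \<le> u k then 1 else 0)"
        using \<open>u j < u k\<close> k by (intro bexI[of _ k]) auto
    qed simp
    then show ?thesis using j k by (simp add: rank_vec_def)
  qed
  have "inj_on (rank_vec N u) ?I"
  proof (rule inj_onI)
    fix j k assume j: "j \<in> ?I" and k: "k \<in> ?I" and eq: "rank_vec N u j = rank_vec N u k"
    show "j = k"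
    proof (rule ccontr)
      assume "j \<noteq> k"
      then have "u j \<noteq> u k" using inj j k by (auto dest: inj_onD)
      then have "u j < u k \<or> u k < u j" by auto
      then show False using strict_mono[OF j k] strict_mono[OF k j] eq by auto
    qed
  qed
  moreover have "rank_vec N u ` ?I = ?I"
    using range card_image[OF \<open>inj_on (rank_vec N u) ?I\<close>] by (intro card_subset_eq) auto
  ultimately show ?thesis
    by (intro bij_imp_permutes rank_vec_outside) (auto simp: bij_betw_def)
qed

lemma rank_vec_measurable:
  assumes j: "j \<in> {1..N}"
  shows "(\<lambda>u. real (rank_vec N u j)) \<in> borel_measurable (unif_vec N)"
proof -
  have "(\<lambda>u. \<Sum>k\<in>{1..N}. if u k \<le> u j then 1 else 0::real) \<in> borel_measurable (unif_vec N)"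
    using j by (intro borel_measurable_sum coordinate_comparisons_measurable(1))
  then show ?thesis by (simp only: real_rank_vec[OF j])
qed

lemma AE_unif_vec_distinct:
  assumes a: "a \<in> {1..N}" and b: "b \<in> {1..N}" and "a \<noteq> b"
  shows "AE x in unif_vec N. x a \<noteq> x b"
proof -
  interpret prob_space "unif_vec N" by (rule prob_space_unif_vec)
  let ?f = "\<lambda>x. if x a = x b then 1 else 0::real"
  have intf: "integrable (unif_vec N) ?f"
    by (rule integrable_unif_vec_bounded[where B=1]) (auto intro: coordinate_comparisons_measurable a b)
  have "integral\<^sup>L (unif_vec N) ?f = 0"
  proof (rule integral_unif_vec_vanishing_coordinate[OF a intf])
    fix x assume x: "x \<in> space (PiM ({1..N} - {a}) (\<lambda>_. unif))"
    have "x b \<in> {0..1}" using x b \<open>a \<noteq> b\<close> by (intro coordinate_range) auto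
    then show "integral\<^sup>L unif (\<lambda>y. ?f (x(a:=y))) = 0"
      using \<open>a \<noteq> b\<close> integral_unif_interval[of "x b" "x b"] by simp
  qed
  then have "AE x in unif_vec N. ?f x = 0"
    using integral_nonneg_eq_0_iff_AE[OF intf] by auto
  then show ?thesis by eventually_elim (auto split: if_splits)
qed

lemma AE_unif_vec_inj: "AE u in unif_vec N. inj_on u {1..N}"
proof -
  have "AE u in unif_vec N. \<forall>a\<in>{1..N}. \<forall>b\<in>{1..N} - {a}. u a \<noteq> u b"
    by (intro AE_finite_allI AE_unif_vec_distinct) auto
  then show ?thesis
  proof eventually_elim
    case (elim u)
    show ?case by (rule inj_onI) (use elim in blast)
  qed
qed

definition rank_event :: "nat \<Rightarrow> (nat \<Rightarrow> nat) \<Rightarrow> (nat \<Rightarrow> real) set" where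
  "rank_event N \<sigma> = {u \<in> space (unif_vec N). rank_vec N u = \<sigma>}"

lemma rank_event_space: "rank_event N \<sigma> \<inter> space (unif_vec N) = rank_event N \<sigma>"
  unfolding rank_event_def by auto

lemma rank_event_sets:
  assumes s: "\<sigma> \<in> perms N"
  shows "rank_event N \<sigma> \<in> sets (unif_vec N)"
proof -
  have "rank_vec N u = \<sigma> \<longleftrightarrow> (\<forall>j\<in>{1..N}. real (rank_vec N u j) = real (\<sigma> j))" for u
    using s by (auto simp: fun_eq_iff rank_vec_outside permutes_not_in)
  then have "rank_event N \<sigma> = {u\<in>space (unif_vec N). \<forall>j\<in>{1..N}. real (rank_vec N u j) = real (\<sigma> j)}"
    unfolding rank_event_def by auto
  also have "\<dots> \<in> sets (unif_vec N)"
  proof (rule sets.sets_Collect_finite_All)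
    fix j assume j: "j \<in> {1..N}"
    have "{u\<in>space (unif_vec N). real (rank_vec N u j) = real (\<sigma> j)}
        = (\<lambda>u. real (rank_vec N u j)) -` {real (\<sigma> j)} \<inter> space (unif_vec N)" by auto
    then show "{u\<in>space (unif_vec N). real (rank_vec N u j) = real (\<sigma> j)} \<in> sets (unif_vec N)"
      using measurable_sets[OF rank_vec_measurable[OF j], of "{real (\<sigma> j)}"] by simp
  qed simp
  finally show ?thesis .
qed


text \<open>Permuting the coordinates permutes the ranks; since the product law is invariant
  under coordinate permutations, every rank event has the same probability.\<close>

lemma rank_vec_reindex:
  assumes t: "\<tau> permutes {1..N}"
  shows "rank_vec N (\<lambda>n\<in>{1..N}. u (\<tau> n)) = rank_vec N u \<circ> \<tau>"
proof
  fix j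
  show "rank_vec N (\<lambda>n\<in>{1..N}. u (\<tau> n)) j = (rank_vec N u \<circ> \<tau>) j"
  proof (cases "j \<in> {1..N}")
    case True
    have tj: "\<tau> j \<in> {1..N}" using True permutes_in_image[OF t] by simp
    have "rank_vec N (\<lambda>n\<in>{1..N}. u (\<tau> n)) j = (\<Sum>k\<in>{1..N}. if u (\<tau> k) \<le> u (\<tau> j) then 1 else 0)"
      using True by (simp add: rank_vec_def)
    also have "\<dots> = (\<Sum>k\<in>{1..N}. if u k \<le> u (\<tau> j) then 1 else 0)"
      using sum.reindex_bij_betw[OF permutes_imp_bij[OF t], of "\<lambda>k. if u k \<le> u (\<tau> j) then 1 else (0::nat)"]
      by simp
    also have "\<dots> = rank_vec N u (\<tau> j)" using tj by (simp add: rank_vec_def)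
    finally show ?thesis by simp
  next
    case False
    then show ?thesis by (simp add: rank_vec_outside permutes_not_in[OF t False])
  qed
qed

lemma measure_rank_event_reindex:
  assumes s: "\<sigma> \<in> perms N" and t: "\<tau> \<in> perms N"
  shows "measure (unif_vec N) (rank_event N (\<sigma> \<circ> \<tau>)) = measure (unif_vec N) (rank_event N \<sigma>)"
proof -
  let ?I = "{1..N}"
  define sh where "sh u = (\<lambda>n\<in>?I. u (\<tau> n))" for u :: "nat \<Rightarrow> real"
  have tp: "\<tau> permutes ?I" using t by simp
  have st: "\<sigma> \<circ> \<tau> \<in> perms N" using s tp by (simp add: permutes_compose)
  have shm: "sh \<in> measurable (unif_vec N) (unif_vec N)"
    unfolding sh_def unif_vec_def
    by (rule measurable_restrict, rule measurable_component_singleton)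
       (use permutes_in_image[OF tp] in auto)
  have invariant: "distr (unif_vec N) (unif_vec N) sh = unif_vec N"
    unfolding unif_vec_def sh_def
    using distr_PiM_reindex[of ?I "\<lambda>_. unif" \<tau> ?I] prob_space_unif permutes_inj_on[OF tp]
      permutes_in_image[OF tp]
    by auto
  have preimage: "sh -` rank_event N (\<sigma> \<circ> \<tau>) \<inter> space (unif_vec N) = rank_event N \<sigma>"
  proof -
    have "rank_vec N (sh u) = \<sigma> \<circ> \<tau> \<longleftrightarrow> rank_vec N u = \<sigma>" for u
      unfolding sh_def rank_vec_reindex[OF tp]
      using surj_fun_eq[OF permutes_surj[OF tp], of "rank_vec N u" \<sigma>] by (auto simp: fun_eq_iff)
    then show ?thesis using measurable_space[OF shm] unfolding rank_event_def by auto
  qed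
  have "measure (unif_vec N) (rank_event N (\<sigma> \<circ> \<tau>))
      = measure (distr (unif_vec N) (unif_vec N) sh) (rank_event N (\<sigma> \<circ> \<tau>))"
    by (simp add: invariant)
  also have "\<dots> = measure (unif_vec N) (rank_event N \<sigma>)"
    by (subst measure_distr[OF shm rank_event_sets[OF st]]) (simp add: preimage)
  finally show ?thesis .
qed

lemma integral_rank_vec:
  fixes g :: "(nat \<Rightarrow> nat) \<Rightarrow> 'b::{banach, second_countable_topology}"
  assumes gm: "(\<lambda>u. g (rank_vec N u)) \<in> borel_measurable (unif_vec N)"
  shows "integral\<^sup>L (unif_vec N) (\<lambda>u. g (rank_vec N u))
       = (\<Sum>\<sigma>\<in>perms N. measure (unif_vec N) (rank_event N \<sigma>) *\<^sub>R g \<sigma>)"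
proof -
  interpret P: prob_space "unif_vec N" by (rule prob_space_unif_vec)
  have fin: "finite (perms N)" by (rule finite_permutations) simp
  have "integral\<^sup>L (unif_vec N) (\<lambda>u. g (rank_vec N u))
      = integral\<^sup>L (unif_vec N) (\<lambda>u. \<Sum>\<sigma>\<in>perms N. indicator (rank_event N \<sigma>) u *\<^sub>R g \<sigma>)"
  proof (rule integral_cong_AE[OF gm])
    show "(\<lambda>u. \<Sum>\<sigma>\<in>perms N. indicator (rank_event N \<sigma>) u *\<^sub>R g \<sigma>) \<in> borel_measurable (unif_vec N)"
      by (intro borel_measurable_sum borel_measurable_scaleR borel_measurable_indicator
          borel_measurable_const rank_event_sets) simp
    show "AE u in unif_vec N. g (rank_vec N u) = (\<Sum>\<sigma>\<in>perms N. indicator (rank_event N \<sigma>) u *\<^sub>R g \<sigma>)"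
      using AE_unif_vec_inj[of N] AE_space
    proof eventually_elim
      case (elim u)
      have "(\<Sum>\<sigma>\<in>perms N. indicator (rank_event N \<sigma>) u *\<^sub>R g \<sigma>)
          = (\<Sum>\<sigma>\<in>perms N. if rank_vec N u = \<sigma> then g \<sigma> else 0)"
        using elim(2) by (intro sum.cong refl) (auto simp: rank_event_def indicator_def)
      also have "\<dots> = g (rank_vec N u)"
        using rank_vec_permutes[OF elim(1)] fin by (simp add: sum.delta)
      finally show ?case by simp
    qed
  qed
  also have "\<dots> = (\<Sum>\<sigma>\<in>perms N. integral\<^sup>L (unif_vec N) (\<lambda>u. indicator (rank_event N \<sigma>) u *\<^sub>R g \<sigma>))"
    by (rule Bochner_Integration.integral_sum)
       (auto intro!: integrable_scaleR_left integrable_real_indicator rank_event_sets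
         simp: P.emeasure_eq_measure)
  also have "\<dots> = (\<Sum>\<sigma>\<in>perms N. measure (unif_vec N) (rank_event N \<sigma>) *\<^sub>R g \<sigma>)"
    by (intro sum.cong refl, subst integral_scaleR_left)
       (auto intro!: integrable_real_indicator rank_event_sets simp: P.emeasure_eq_measure rank_event_space)
  finally show ?thesis .
qed

text \<open>All \<open>N!\<close> rank events are equally likely and cover the cube up to a null set.\<close>

lemma measure_rank_event:
  assumes s: "\<sigma> \<in> perms N"
  shows "measure (unif_vec N) (rank_event N \<sigma>) = 1 / fact N"
proof -
  interpret P: prob_space "unif_vec N" by (rule prob_space_unif_vec)
  have same: "measure (unif_vec N) (rank_event N \<tau>) = measure (unif_vec N) (rank_event N id)"
    if "\<tau> \<in> perms N" for \<tau>
    using measure_rank_event_reindex[OF _ that, of id] by simp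
  have "1 = (\<Sum>\<sigma>\<in>perms N. measure (unif_vec N) (rank_event N \<sigma>))"
    using integral_rank_vec[of "\<lambda>_. 1::real" N] by (simp add: P.prob_space)
  also have "\<dots> = (\<Sum>\<sigma>\<in>perms N. measure (unif_vec N) (rank_event N id))"
    by (rule sum.cong[OF refl]) (rule same)
  also have "\<dots> = fact N * measure (unif_vec N) (rank_event N id)"
    using card_permutations[of "{1..N}" N] by simp
  finally show ?thesis using same[OF s] by (simp add: field_simps)
qed

lemma integral_rank_law:
  fixes g :: "(nat \<Rightarrow> nat) \<Rightarrow> 'b::{banach, second_countable_topology}"
  assumes gm: "(\<lambda>u. g (rank_vec N u)) \<in> borel_measurable (unif_vec N)"
  shows "integral\<^sup>L (rank_law N) g = integral\<^sup>L (unif_vec N) (\<lambda>u. g (rank_vec N u))"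
proof -
  have fin: "finite (perms N)" by (rule finite_permutations) simp
  have ne: "perms N \<noteq> {}" using permutes_id by blast
  have "integral\<^sup>L (rank_law N) g = (\<Sum>\<sigma>\<in>perms N. pmf (pmf_of_set (perms N)) \<sigma> *\<^sub>R g \<sigma>)"
    unfolding rank_law_def by (rule integral_measure_pmf[OF fin]) (use set_pmf_of_set[OF ne fin] in auto)
  also have "\<dots> = (\<Sum>\<sigma>\<in>perms N. measure (unif_vec N) (rank_event N \<sigma>) *\<^sub>R g \<sigma>)"
    by (intro sum.cong refl, subst pmf_of_set[OF ne fin]) (simp add: measure_rank_event card_permutations)
  also have "\<dots> = integral\<^sup>L (unif_vec N) (\<lambda>u. g (rank_vec N u))"
    by (rule integral_rank_vec[OF gm, symmetric])
  finally show ?thesis .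
qed


section \<open>H\'ajek decomposition of the centred rank sum\<close>

text \<open>Writing each rank through indicators and splitting every indicator with the H\'ajek
  kernel, the centred rank sum becomes a sum of independent terms (the linear part) plus a
  degenerate U-statistic (the remainder) whose terms are pairwise orthogonal.\<close>

definition linear_part :: "nat \<Rightarrow> (nat \<Rightarrow> real) \<Rightarrow> (nat \<Rightarrow> real) \<Rightarrow> real" where
  "linear_part N c u = (\<Sum>m\<in>{1..N}. real N * (c m - pbar c N) * (u m - 1/2))"

definition off_diag :: "nat \<Rightarrow> (nat \<times> nat) set" where
  "off_diag N = (SIGMA j:{1..N}. {1..N} - {j})"

definition remainder :: "nat \<Rightarrow> (nat \<Rightarrow> real) \<Rightarrow> (nat \<Rightarrow> real) \<Rightarrow> real" where
  "remainder N c u = (\<Sum>(j,k)\<in>off_diag N. c j * hajek_kernel (u k) (u j))"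

lemma rank_hajek_expansion:
  assumes j: "j \<in> {1..N}"
  shows "real (rank_vec N u j) - (real N + 1) / 2
       = real N * (u j - 1/2) - (\<Sum>k\<in>{1..N}. u k - 1/2) + (\<Sum>k\<in>{1..N} - {j}. hajek_kernel (u k) (u j))"
proof -
  let ?I = "{1..N}"
  let ?K = "\<Sum>k\<in>?I - {j}. hajek_kernel (u k) (u j)"
  have split: "(if u k \<le> u j then 1 else 0) = (1/2 + u j - u k) + hajek_kernel (u k) (u j)" for k
    by (simp add: hajek_kernel_def)
  have "real (rank_vec N u j) = 1 + (\<Sum>k\<in>?I - {j}. if u k \<le> u j then 1 else 0)"
    using j by (simp add: real_rank_vec sum.remove)
  also have "\<dots> = 1 + (\<Sum>k\<in>?I - {j}. 1/2 + u j - u k) + ?K"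
    by (simp add: split sum.distrib)
  also have "(\<Sum>k\<in>?I - {j}. 1/2 + u j - u k) = real N * (1/2 + u j) - (\<Sum>k\<in>?I. u k) - 1/2"
    using j by (simp add: sum_diff1 sum_subtractf sum.distrib algebra_simps) (simp add: field_simps)
  finally have rank: "real (rank_vec N u j) = 1 + (real N * (1/2 + u j) - (\<Sum>k\<in>?I. u k) - 1/2) + ?K" .
  have "(\<Sum>k\<in>?I. u k - 1/2) = (\<Sum>k\<in>?I. u k) - real N / 2"
    by (simp add: sum_subtractf)
  then show ?thesis unfolding rank by (simp add: algebra_simps)
qed

lemma linear_part_expanded:
  "linear_part N c u = real N * (\<Sum>j\<in>{1..N}. c j * (u j - 1/2)) - (\<Sum>j\<in>{1..N}. c j) * (\<Sum>k\<in>{1..N}. u k - 1/2)"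
proof (cases "N = 0")
  case False
  have "linear_part N c u = (\<Sum>j\<in>{1..N}. real N * (c j * (u j - 1/2)) - (\<Sum>i\<in>{1..N}. c i) * (u j - 1/2))"
    unfolding linear_part_def pbar_def using False by (intro sum.cong refl) (simp add: field_simps)
  then show ?thesis by (simp only: sum_subtractf sum_distrib_left[symmetric])
qed (simp add: linear_part_def)

theorem centered_hajek_decomposition:
  "centered c (rank_vec N u) N = linear_part N c u + remainder N c u"
proof -
  let ?I = "{1..N}"
  define D where "D = (\<Sum>k\<in>?I. u k - 1/2)"
  have "(\<Sum>j\<in>?I. c j * (real (rank_vec N u j) - (real N + 1) / 2))
      = (\<Sum>j\<in>?I. c j * real (rank_vec N u j)) - (\<Sum>j\<in>?I. c j) * ((real N + 1) / 2)"
    by (simp add: right_diff_distrib sum_subtractf sum_distrib_right)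
  then have "centered c (rank_vec N u) N = (\<Sum>j\<in>?I. c j * (real (rank_vec N u j) - (real N + 1) / 2))"
    unfolding centered_def Rstar_def by (simp add: mult.commute)
  also have "\<dots> = (\<Sum>j\<in>?I. c j * (real N * (u j - 1/2) - D)
                       + (\<Sum>k\<in>?I - {j}. c j * hajek_kernel (u k) (u j)))"
  proof (rule sum.cong[OF refl])
    fix j assume j: "j \<in> ?I"
    show "c j * (real (rank_vec N u j) - (real N + 1) / 2) = c j * (real N * (u j - 1/2) - D)
        + (\<Sum>k\<in>?I - {j}. c j * hajek_kernel (u k) (u j))"
      unfolding rank_hajek_expansion[OF j] D_def by (simp add: sum_distrib_left algebra_simps)
  qed
  also have "\<dots> = (\<Sum>j\<in>?I. c j * (real N * (u j - 1/2) - D))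
                 + (\<Sum>j\<in>?I. \<Sum>k\<in>?I - {j}. c j * hajek_kernel (u k) (u j))"
    by (rule sum.distrib)
  also have "(\<Sum>j\<in>?I. c j * (real N * (u j - 1/2) - D))
      = (\<Sum>j\<in>?I. real N * (c j * (u j - 1/2)) - c j * D)"
    by (intro sum.cong) (simp_all add: algebra_simps)
  also have "\<dots> = linear_part N c u"
    unfolding linear_part_expanded D_def[symmetric]
    by (simp add: sum_subtractf sum_distrib_left sum_distrib_right)
  also have "(\<Sum>j\<in>?I. \<Sum>k\<in>?I - {j}. c j * hajek_kernel (u k) (u j)) = remainder N c u"
    unfolding remainder_def off_diag_def by (rule sum.Sigma) auto
  finally show ?thesis .
qed


section \<open>The remainder is negligible\<close>

lemma (in prob_space) second_moment_sparse_sum: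
  fixes X :: "'i \<Rightarrow> 'a \<Rightarrow> real"
  assumes fin: "finite P"
    and meas: "\<And>p. p \<in> P \<Longrightarrow> X p \<in> borel_measurable M"
    and bnd: "\<And>p x. p \<in> P \<Longrightarrow> x \<in> space M \<Longrightarrow> \<bar>X p x\<bar> \<le> B"
    and sparse: "\<And>p. p \<in> P \<Longrightarrow> card {q\<in>P. expectation (\<lambda>x. X p x * X q x) \<noteq> 0} \<le> m"
  shows "expectation (\<lambda>x. (\<Sum>p\<in>P. X p x)^2) \<le> real (card P) * real m * B^2"
proof -
  have prod_bnd: "\<bar>X p x * X q x\<bar> \<le> B^2" if "p \<in> P" "q \<in> P" "x \<in> space M" for p q x
  proof -
    have "\<bar>X p x\<bar> * \<bar>X q x\<bar> \<le> B * B"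
      using bnd[OF that(1,3)] bnd[OF that(2,3)] by (intro mult_mono) auto
    then show ?thesis by (simp add: abs_mult power2_eq_square)
  qed
  have int: "integrable M (\<lambda>x. X p x * X q x)" if "p \<in> P" "q \<in> P" for p q
    by (rule integrable_const_bound[where B="B^2"]) (use prod_bnd that meas in auto)
  have corr_bnd: "expectation (\<lambda>x. X p x * X q x) \<le> B^2" if "p \<in> P" "q \<in> P" for p q
  proof -
    have "expectation (\<lambda>x. X p x * X q x) \<le> expectation (\<lambda>x. B^2)"
      by (rule integral_mono) (use int[OF that] prod_bnd[OF that] in \<open>auto simp: abs_le_iff\<close>)
    then show ?thesis by (simp add: prob_space)
  qed
  have "expectation (\<lambda>x. (\<Sum>p\<in>P. X p x)^2) = expectation (\<lambda>x. \<Sum>p\<in>P. \<Sum>q\<in>P. X p x * X q x)"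
    by (simp add: power2_eq_square sum_product)
  also have "\<dots> = (\<Sum>p\<in>P. \<Sum>q\<in>P. expectation (\<lambda>x. X p x * X q x))"
    by (simp add: int Bochner_Integration.integral_sum Bochner_Integration.integrable_sum)
  also have "\<dots> \<le> (\<Sum>p\<in>P. real m * B^2)"
  proof (rule sum_mono)
    fix p assume p: "p \<in> P"
    let ?S = "{q\<in>P. expectation (\<lambda>x. X p x * X q x) \<noteq> 0}"
    have "(\<Sum>q\<in>P. expectation (\<lambda>x. X p x * X q x)) = (\<Sum>q\<in>?S. expectation (\<lambda>x. X p x * X q x))"
      by (rule sum.mono_neutral_right) (auto simp: fin)
    also have "\<dots> \<le> (\<Sum>q\<in>?S. B^2)"
      by (rule sum_mono) (use corr_bnd p in auto)
    also have "\<dots> \<le> real m * B^2"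
      using sparse[OF p] by (simp add: mult_right_mono)
    finally show "(\<Sum>q\<in>P. expectation (\<lambda>x. X p x * X q x)) \<le> real m * B^2" .
  qed
  finally show ?thesis by simp
qed

text \<open>First absolute moment from the second one, via \<open>2 a \<bar>x\<bar> \<le> a\<^sup>2 + x\<^sup>2\<close>.\<close>

lemma (in prob_space) abs_moment_le_second_moment:
  fixes X :: "'a \<Rightarrow> real"
  assumes "integrable M X" "integrable M (\<lambda>x. (X x)^2)" and a: "a > 0"
  shows "expectation (\<lambda>x. \<bar>X x\<bar>) \<le> (a + expectation (\<lambda>x. (X x)^2) / a) / 2"
proof -
  have pt: "\<bar>X x\<bar> \<le> (a + (X x)^2 / a) / 2" for x
  proof -
    have "0 \<le> (\<bar>X x\<bar> - a)^2" by simp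
    then have "2 * \<bar>X x\<bar> * a \<le> a * a + (X x)^2"
      by (simp add: power2_eq_square algebra_simps)
    then show ?thesis using a by (simp add: field_simps)
  qed
  have "expectation (\<lambda>x. \<bar>X x\<bar>) \<le> expectation (\<lambda>x. (a + (X x)^2 / a) / 2)"
    by (rule integral_mono) (use assms pt in auto)
  also have "\<dots> = (a + expectation (\<lambda>x. (X x)^2) / a) / 2"
    using assms by (simp add: prob_space)
  finally show ?thesis .
qed

text \<open>Two kernel terms are orthogonal as soon as one of the four indices occurs only once
  in its own term: integrating out that coordinate kills the product.\<close>

lemma hajek_kernel_orthogonal:
  assumes I: "a \<in> {1..N}" "b \<in> {1..N}" "c \<in> {1..N}" "d \<in> {1..N}"
    and lonely: "a \<notin> {b, c, d} \<or> b \<notin> {a, c, d}"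
  shows "integral\<^sup>L (unif_vec N) (\<lambda>x. hajek_kernel (x a) (x b) * hajek_kernel (x c) (x d)) = 0"
proof -
  have int: "integrable (unif_vec N) (\<lambda>x. hajek_kernel (x a) (x b) * hajek_kernel (x c) (x d))"
  proof (rule integrable_unif_vec_bounded[where B="3/2 * (3/2)"])
    show "(\<lambda>x. hajek_kernel (x a) (x b) * hajek_kernel (x c) (x d)) \<in> borel_measurable (unif_vec N)"
      using I by (intro borel_measurable_times coordinate_comparisons_measurable)
    fix x assume x: "x \<in> space (unif_vec N)"
    have r: "x i \<in> {0..1}" if "i \<in> {1..N}" for i
      using x that unfolding unif_vec_def by (rule coordinate_range)
    have "\<bar>hajek_kernel (x a) (x b)\<bar> \<le> 3/2" "\<bar>hajek_kernel (x c) (x d)\<bar> \<le> 3/2"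
      using hajek_kernel_bound[OF r[OF I(1)] r[OF I(2)]] hajek_kernel_bound[OF r[OF I(3)] r[OF I(4)]] .
    then have "\<bar>hajek_kernel (x a) (x b)\<bar> * \<bar>hajek_kernel (x c) (x d)\<bar> \<le> 3/2 * (3/2)"
      by (intro mult_mono) auto
    then show "norm (hajek_kernel (x a) (x b) * hajek_kernel (x c) (x d)) \<le> 3/2 * (3/2)"
      by (simp add: abs_mult)
  qed
  from lonely show ?thesis
  proof
    assume a: "a \<notin> {b, c, d}"
    show ?thesis
    proof (rule integral_unif_vec_vanishing_coordinate[OF I(1) int])
      fix x assume "x \<in> space (PiM ({1..N} - {a}) (\<lambda>_. unif))"
      then have "x b \<in> {0..1}" using a I by (intro coordinate_range) auto
      have "integral\<^sup>L unif (\<lambda>y. hajek_kernel ((x(a:=y)) a) ((x(a:=y)) b)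
                                  * hajek_kernel ((x(a:=y)) c) ((x(a:=y)) d))
          = integral\<^sup>L unif (\<lambda>y. hajek_kernel y (x b)) * hajek_kernel (x c) (x d)"
        using a by simp
      also have "\<dots> = 0" using hajek_kernel_mean_first[OF \<open>x b \<in> {0..1}\<close>] by simp
      finally show "integral\<^sup>L unif (\<lambda>y. hajek_kernel ((x(a:=y)) a) ((x(a:=y)) b)
                                  * hajek_kernel ((x(a:=y)) c) ((x(a:=y)) d)) = 0" .
    qed
  next
    assume b: "b \<notin> {a, c, d}"
    show ?thesis
    proof (rule integral_unif_vec_vanishing_coordinate[OF I(2) int])
      fix x assume "x \<in> space (PiM ({1..N} - {b}) (\<lambda>_. unif))"
      then have "x a \<in> {0..1}" using b I by (intro coordinate_range) auto
      have "integral\<^sup>L unif (\<lambda>y. hajek_kernel ((x(b:=y)) a) ((x(b:=y)) b)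
                                  * hajek_kernel ((x(b:=y)) c) ((x(b:=y)) d))
          = integral\<^sup>L unif (\<lambda>y. hajek_kernel (x a) y) * hajek_kernel (x c) (x d)"
        using b by simp
      also have "\<dots> = 0" using hajek_kernel_mean_second[OF \<open>x a \<in> {0..1}\<close>] by simp
      finally show "integral\<^sup>L unif (\<lambda>y. hajek_kernel ((x(b:=y)) a) ((x(b:=y)) b)
                                  * hajek_kernel ((x(b:=y)) c) ((x(b:=y)) d)) = 0" .
    qed
  qed
qed


definition remainder_term :: "(nat \<Rightarrow> real) \<Rightarrow> nat \<times> nat \<Rightarrow> (nat \<Rightarrow> real) \<Rightarrow> real" where
  "remainder_term c p u = c (fst p) * hajek_kernel (u (snd p)) (u (fst p))"

lemma remainder_as_sum: "remainder N c u = (\<Sum>p\<in>off_diag N. remainder_term c p u)"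
  unfolding remainder_def remainder_term_def by (simp add: case_prod_beta)

lemma off_diag_memD: "p \<in> off_diag N \<Longrightarrow> fst p \<in> {1..N} \<and> snd p \<in> {1..N} \<and> fst p \<noteq> snd p"
  unfolding off_diag_def by auto

lemma card_off_diag: "card (off_diag N) \<le> N * N"
proof -
  have "card (off_diag N) \<le> card ({1..N} \<times> {1..N})"
    by (rule card_mono) (auto simp: off_diag_def)
  then show ?thesis by (simp add: card_cartesian_product)
qed

lemma remainder_term_measurable:
  "p \<in> off_diag N \<Longrightarrow> remainder_term c p \<in> borel_measurable (unif_vec N)"
  unfolding remainder_term_def
  by (intro borel_measurable_times borel_measurable_const coordinate_comparisons_measurable(3))
     (auto dest: off_diag_memD)

lemma remainder_term_bound:
  assumes c: "\<And>j. j \<in> {1..N} \<Longrightarrow> \<bar>c j\<bar> \<le> 1"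
    and p: "p \<in> off_diag N" and u: "u \<in> space (unif_vec N)"
  shows "\<bar>remainder_term c p u\<bar> \<le> 3/2"
proof -
  have range: "u i \<in> {0..1}" if "i \<in> {1..N}" for i
    using u that unfolding unif_vec_def by (rule coordinate_range)
  have I: "fst p \<in> {1..N}" "snd p \<in> {1..N}" using off_diag_memD[OF p] by auto
  have "\<bar>c (fst p)\<bar> * \<bar>hajek_kernel (u (snd p)) (u (fst p))\<bar> \<le> 1 * (3/2)"
    by (rule mult_mono[OF c[OF I(1)] hajek_kernel_bound[OF range[OF I(2)] range[OF I(1)]]]) auto
  then show ?thesis by (simp add: remainder_term_def abs_mult)
qed

lemma remainder_term_uncorrelated:
  assumes p: "p \<in> off_diag N" and q: "q \<in> off_diag N" and far: "q \<notin> {p, (snd p, fst p)}"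
  shows "integral\<^sup>L (unif_vec N) (\<lambda>u. remainder_term c p u * remainder_term c q u) = 0"
proof -
  have P: "fst p \<in> {1..N}" "snd p \<in> {1..N}" "fst p \<noteq> snd p" using off_diag_memD[OF p] by auto
  have Q: "fst q \<in> {1..N}" "snd q \<in> {1..N}" "fst q \<noteq> snd q" using off_diag_memD[OF q] by auto
  have lonely: "snd p \<notin> {fst p, snd q, fst q} \<or> fst p \<notin> {snd p, snd q, fst q}"
    using far P(3) Q(3) by (cases p, cases q) auto
  have "(\<lambda>u. remainder_term c p u * remainder_term c q u) = (\<lambda>u. (c (fst p) * c (fst q)) *
      (hajek_kernel (u (snd p)) (u (fst p)) * hajek_kernel (u (snd q)) (u (fst q))))"
    by (simp add: remainder_term_def fun_eq_iff mult_ac)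
  then show ?thesis
    using hajek_kernel_orthogonal[OF P(2) P(1) Q(2) Q(1) lonely] by simp
qed

text \<open>Each of the at most \<open>N\<^sup>2\<close> terms is bounded by \<open>3/2\<close> and correlated with at most two
  terms, so the remainder has second moment \<open>O(N\<^sup>2)\<close>.\<close>

lemma remainder_second_moment:
  assumes c: "\<And>j. j \<in> {1..N} \<Longrightarrow> \<bar>c j\<bar> \<le> 1"
  shows "integral\<^sup>L (unif_vec N) (\<lambda>u. (remainder N c u)^2) \<le> 9/2 * real N ^ 2"
proof -
  interpret P: prob_space "unif_vec N" by (rule prob_space_unif_vec)
  have sparse: "card {q \<in> off_diag N. P.expectation (\<lambda>u. remainder_term c p u * remainder_term c q u) \<noteq> 0} \<le> 2"
    if p: "p \<in> off_diag N" for p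
  proof -
    have "card {q \<in> off_diag N. P.expectation (\<lambda>u. remainder_term c p u * remainder_term c q u) \<noteq> 0}
        \<le> card {p, (snd p, fst p)}"
      by (rule card_mono) (use remainder_term_uncorrelated[OF p] in auto)
    also have "\<dots> \<le> 2" by (simp add: card_insert_if)
    finally show ?thesis .
  qed
  have "P.expectation (\<lambda>u. (remainder N c u)^2) \<le> real (card (off_diag N)) * real 2 * (3/2)^2"
    unfolding remainder_as_sum
    by (rule P.second_moment_sparse_sum[OF _ remainder_term_measurable remainder_term_bound[OF c] sparse])
       (simp add: off_diag_def)
  also have "\<dots> \<le> real (N * N) * 2 * (3/2)^2"
    using card_off_diag[of N] by (intro mult_right_mono) (auto simp del: of_nat_mult)
  finally show ?thesis by (simp add: power2_eq_square)
qed

lemma remainder_measurable: "remainder N c \<in> borel_measurable (unif_vec N)"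
  unfolding remainder_as_sum by (intro borel_measurable_sum remainder_term_measurable)

lemma remainder_bound:
  assumes c: "\<And>j. j \<in> {1..N} \<Longrightarrow> \<bar>c j\<bar> \<le> 1" and u: "u \<in> space (unif_vec N)"
  shows "\<bar>remainder N c u\<bar> \<le> real (card (off_diag N)) * (3/2)"
proof -
  have "\<bar>remainder N c u\<bar> \<le> (\<Sum>p\<in>off_diag N. \<bar>remainder_term c p u\<bar>)"
    unfolding remainder_as_sum by (rule sum_abs)
  also have "\<dots> \<le> (\<Sum>p\<in>off_diag N. 3/2)"
    by (rule sum_mono) (rule remainder_term_bound[OF c _ u])
  finally show ?thesis by simp
qed

lemma remainder_integrable:
  assumes c: "\<And>j. j \<in> {1..N} \<Longrightarrow> \<bar>c j\<bar> \<le> 1"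
  shows "integrable (unif_vec N) (remainder N c)"
    and "integrable (unif_vec N) (\<lambda>u. (remainder N c u)^2)"
proof -
  let ?B = "real (card (off_diag N)) * (3/2)"
  show "integrable (unif_vec N) (remainder N c)"
    by (rule integrable_unif_vec_bounded[where B="?B"])
       (use remainder_measurable remainder_bound[OF c] in auto)
  show "integrable (unif_vec N) (\<lambda>u. (remainder N c u)^2)"
  proof (rule integrable_unif_vec_bounded[where B="?B^2"])
    show "(\<lambda>u. (remainder N c u)^2) \<in> borel_measurable (unif_vec N)"
      by (intro borel_measurable_power remainder_measurable)
    fix u assume "u \<in> space (unif_vec N)"
    then have "\<bar>remainder N c u\<bar>^2 \<le> ?B^2"
      by (intro power_mono remainder_bound[OF c]) auto
    then show "norm ((remainder N c u)^2) \<le> ?B^2" by simp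
  qed
qed

text \<open>Consequently \<open>E|R| \<le> (N + E R\<^sup>2 / N)/2 \<le> 11N/4\<close>.\<close>

lemma remainder_abs_moment:
  assumes c: "\<And>j. j \<in> {1..N} \<Longrightarrow> \<bar>c j\<bar> \<le> 1" and N: "N > 0"
  shows "integral\<^sup>L (unif_vec N) (\<lambda>u. \<bar>remainder N c u\<bar>) \<le> 11/4 * real N"
proof -
  interpret P: prob_space "unif_vec N" by (rule prob_space_unif_vec)
  have "P.expectation (\<lambda>u. \<bar>remainder N c u\<bar>)
      \<le> (real N + P.expectation (\<lambda>u. (remainder N c u)^2) / real N) / 2"
    using N by (intro P.abs_moment_le_second_moment remainder_integrable[OF c]) auto
  also have "\<dots> \<le> (real N + 9/2 * real N ^ 2 / real N) / 2"
    using remainder_second_moment[OF c] N by (intro divide_right_mono add_left_mono) auto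
  also have "\<dots> = 11/4 * real N" using N by (simp add: power2_eq_square)
  finally show ?thesis .
qed


section \<open>Characteristic function of the linear part\<close>

text \<open>The linear part is a weighted sum of independent centred uniforms, so its
  characteristic function factorises. Each factor \<open>\<phi>(w) = E e^{i w (U - 1/2)}\<close> agrees with
  the Gaussian \<open>e^{-w\<^sup>2/24}\<close> up to \<open>O(|w|\<^sup>3 + w\<^sup>4)\<close>, by a second-order Taylor expansion.\<close>

definition char_unif_centered :: "real \<Rightarrow> complex" where
  "char_unif_centered w = integral\<^sup>L unif (\<lambda>y. iexp (w * (y - 1/2)))"

lemma integrable_unif_iexp: "integrable unif (\<lambda>y. iexp (w * (y - 1/2)))"
  by (auto intro!: integrable_unif_cont continuous_intros)

lemma integral_unif_centered_moments:
  "integral\<^sup>L unif (\<lambda>y. y - 1/2) = 0" "integral\<^sup>L unif (\<lambda>y. (y - 1/2)^2) = 1/12"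
proof -
  have i1: "integrable unif (\<lambda>y::real. y)" "integrable unif (\<lambda>y::real. y^2)"
    by (auto intro!: integrable_unif_cont continuous_intros)
  show "integral\<^sup>L unif (\<lambda>y. y - 1/2) = 0"
    using i1 by (simp add: Bochner_Integration.integral_diff integral_unif_id)
  have "(\<lambda>y::real. (y - 1/2)^2) = (\<lambda>y. y^2 - y + 1/4)"
    by (auto simp: power2_eq_square field_simps)
  then show "integral\<^sup>L unif (\<lambda>y. (y - 1/2)^2) = 1/12"
    using i1 integral_unif_power[of 2]
    by (simp add: Bochner_Integration.integral_diff Bochner_Integration.integral_add integral_unif_id)
qed

text \<open>The second-order Taylor polynomial of \<open>e^{ix}\<close> at \<open>x = w (y - 1/2)\<close>, and its mean.\<close>

definition taylor2 :: "real \<Rightarrow> real \<Rightarrow> complex" where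
  "taylor2 w y = complex_of_real (1 - (w * (y - 1/2))^2 / 2) + \<i> * complex_of_real (w * (y - 1/2))"

lemma integrable_taylor2: "integrable unif (taylor2 w)"
  unfolding taylor2_def by (auto intro!: integrable_unif_cont continuous_intros)

lemma integral_taylor2: "integral\<^sup>L unif (taylor2 w) = 1 - w^2/24"
proof -
  have i: "integrable unif (\<lambda>y::real. (y - 1/2)^2)" "integrable unif (\<lambda>y::real. y - 1/2)"
    by (auto intro!: integrable_unif_cont continuous_intros)
  have re: "integral\<^sup>L unif (\<lambda>y. 1 - (w * (y - 1/2))^2 / 2) = 1 - w^2/24"
    using i integral_unif_centered_moments(2)
    by (simp add: power_mult_distrib Bochner_Integration.integral_diff)
  have im: "integral\<^sup>L unif (\<lambda>y. w * (y - 1/2)) = 0"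
    using integral_unif_centered_moments(1) by simp
  have "integral\<^sup>L unif (taylor2 w)
      = integral\<^sup>L unif (\<lambda>y. complex_of_real (1 - (w * (y - 1/2))^2 / 2))
        + integral\<^sup>L unif (\<lambda>y. \<i> * complex_of_real (w * (y - 1/2)))"
    unfolding taylor2_def
    by (rule Bochner_Integration.integral_add) (auto intro!: integrable_unif_cont continuous_intros)
  also have "\<dots> = complex_of_real (integral\<^sup>L unif (\<lambda>y. 1 - (w * (y - 1/2))^2 / 2))
        + \<i> * complex_of_real (integral\<^sup>L unif (\<lambda>y. w * (y - 1/2)))"
    by (simp only: integral_complex_of_real integral_mult_right_zero)
  finally show ?thesis unfolding re im by simp
qed

lemma taylor2_error:
  assumes y: "y \<in> {0..1}"
  shows "norm (iexp (w * (y - 1/2)) - taylor2 w y) \<le> \<bar>w\<bar>^3 / 48"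
proof -
  have "(\<Sum>k\<le>2. (\<i> * complex_of_real (w * (y - 1/2)))^k / fact k) = taylor2 w y"
    by (simp add: taylor2_def numeral_2_eq_2 power2_eq_square field_simps)
  then have "norm (iexp (w * (y - 1/2)) - taylor2 w y) \<le> \<bar>w * (y - 1/2)\<bar>^3 / 6"
    using iexp_approx1[of "w * (y - 1/2)" 2] by (simp add: numeral_3_eq_3)
  also have "\<dots> \<le> (\<bar>w\<bar> / 2)^3 / 6"
  proof -
    have "\<bar>y - 1/2\<bar> \<le> 1/2" using y by (auto simp: abs_if)
    then have "\<bar>w * (y - 1/2)\<bar> \<le> \<bar>w\<bar> / 2"
      using mult_left_mono[of "\<bar>y - 1/2\<bar>" "1/2" "\<bar>w\<bar>"] by (simp add: abs_mult)
    then show ?thesis by (intro divide_right_mono power_mono) auto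
  qed
  finally show ?thesis by (simp add: power_divide)
qed

lemma char_unif_centered_quadratic: "norm (char_unif_centered w - (1 - w^2/24)) \<le> \<bar>w\<bar>^3 / 48"
proof -
  have "char_unif_centered w - (1 - w^2/24) = integral\<^sup>L unif (\<lambda>y. iexp (w * (y - 1/2)) - taylor2 w y)"
    unfolding char_unif_centered_def integral_taylor2[symmetric]
    by (rule Bochner_Integration.integral_diff[symmetric, OF integrable_unif_iexp integrable_taylor2])
  also have "norm \<dots> \<le> integral\<^sup>L unif (\<lambda>y. norm (iexp (w * (y - 1/2)) - taylor2 w y))"
    by (rule integral_norm_bound)
  also have "\<dots> \<le> integral\<^sup>L unif (\<lambda>y. \<bar>w\<bar>^3 / 48)"
  proof (rule integral_mono)
    show "integrable unif (\<lambda>y. norm (iexp (w * (y - 1/2)) - taylor2 w y))"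
      by (intro integrable_norm Bochner_Integration.integrable_diff integrable_unif_iexp integrable_taylor2)
    show "norm (iexp (w * (y - 1/2)) - taylor2 w y) \<le> \<bar>w\<bar>^3 / 48" if "y \<in> space unif" for y
      using that by (intro taylor2_error) simp
  qed simp
  finally show ?thesis by simp
qed

lemma exp_neg_quadratic_bound:
  fixes z :: real assumes z: "0 \<le> z"
  shows "\<bar>exp (- z) - (1 - z)\<bar> \<le> z^2 / 2"
proof -
  have lower: "1 - z \<le> exp (- z)" using exp_ge_add_one_self[of "-z"] by simp
  have "(\<lambda>x. 1 - x + x^2/2 - exp (-x)) 0 \<le> (\<lambda>x. 1 - x + x^2/2 - exp (-x)) z"
  proof (rule DERIV_nonneg_imp_nondecreasing[OF z])
    fix x :: real
    have "DERIV (\<lambda>x. 1 - x + x^2/2 - exp (-x)) x :> (- 1 + x + exp (-x))"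
      by (auto intro!: derivative_eq_intros)
    moreover have "- 1 + x + exp (-x) \<ge> 0" using exp_ge_add_one_self[of "-x"] by simp
    ultimately show "\<exists>y. DERIV (\<lambda>x. 1 - x + x^2/2 - exp (-x)) x :> y \<and> y \<ge> 0" by blast
  qed
  then have upper: "exp (- z) \<le> 1 - z + z^2/2" by simp
  show ?thesis using lower upper by (simp add: abs_if)
qed

lemma char_unif_centered_gaussian:
  "norm (char_unif_centered w - complex_of_real (exp (- (w^2/24)))) \<le> \<bar>w\<bar>^3 / 48 + w^4 / 1152"
proof -
  have "norm (char_unif_centered w - complex_of_real (exp (- (w^2/24))))
      \<le> norm (char_unif_centered w - (1 - w^2/24))
        + norm (complex_of_real (1 - w^2/24) - complex_of_real (exp (- (w^2/24))))"
    by (rule order_trans[OF _ norm_triangle_ineq]) simp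
  also have "norm (complex_of_real (1 - w^2/24) - complex_of_real (exp (- (w^2/24)))) \<le> (w^2/24)^2 / 2"
    using exp_neg_quadratic_bound[of "w^2/24"]
    by (simp add: norm_of_real abs_minus_commute del: of_real_diff add: of_real_diff[symmetric])
  finally show ?thesis
    using char_unif_centered_quadratic[of w] by (simp add: power2_eq_square power4_eq_xxxx)
qed

lemma norm_char_unif_centered: "norm (char_unif_centered w) \<le> 1"
proof -
  have "norm (char_unif_centered w) \<le> integral\<^sup>L unif (\<lambda>y. norm (iexp (w * (y - 1/2))))"
    unfolding char_unif_centered_def by (rule integral_norm_bound)
  then show ?thesis by (simp add: norm_exp_i_times)
qed

lemma linear_part_measurable: "linear_part N c \<in> borel_measurable (unif_vec N)"
  unfolding linear_part_def
  by (intro borel_measurable_sum borel_measurable_times borel_measurable_const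
      borel_measurable_diff coordinate_measurable) auto

lemma char_linear_part:
  "integral\<^sup>L (unif_vec N) (\<lambda>u. iexp (t * linear_part N c u / s))
     = (\<Prod>m\<in>{1..N}. char_unif_centered (t * (real N * (c m - pbar c N)) / s))"
proof -
  let ?w = "\<lambda>m. t * (real N * (c m - pbar c N)) / s"
  have factor: "iexp (t * linear_part N c u / s) = (\<Prod>m\<in>{1..N}. iexp (?w m * (u m - 1/2)))" for u
  proof -
    have "t * linear_part N c u / s = (\<Sum>m\<in>{1..N}. ?w m * (u m - 1/2))"
      unfolding linear_part_def by (simp add: sum_distrib_left sum_divide_distrib mult.assoc)
    then show ?thesis by (simp add: sum_distrib_left exp_sum)
  qed
  have "integral\<^sup>L (unif_vec N) (\<lambda>u. \<Prod>m\<in>{1..N}. iexp (?w m * (u m - 1/2)))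
      = (\<Prod>m\<in>{1..N}. integral\<^sup>L unif (\<lambda>y. iexp (?w m * (y - 1/2))))"
    unfolding unif_vec_def by (rule unif_prod.product_integral_prod[OF _ integrable_unif_iexp]) simp
  then show ?thesis by (simp only: factor char_unif_centered_def)
qed

lemma char_linear_part_gaussian:
  fixes c :: "nat \<Rightarrow> real" and t s :: real and N :: nat
  defines "w \<equiv> \<lambda>m. t * (real N * (c m - pbar c N)) / s"
  shows "norm (integral\<^sup>L (unif_vec N) (\<lambda>u. iexp (t * linear_part N c u / s))
               - complex_of_real (exp (- ((\<Sum>m\<in>{1..N}. (w m)^2) / 24))))
     \<le> (\<Sum>m\<in>{1..N}. \<bar>w m\<bar>^3 / 48 + (w m)^4 / 1152)"
proof -
  have gauss: "complex_of_real (exp (- ((\<Sum>m\<in>{1..N}. (w m)^2) / 24)))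
      = (\<Prod>m\<in>{1..N}. complex_of_real (exp (- ((w m)^2/24))))"
    by (simp add: sum_divide_distrib sum_negf[symmetric] exp_sum of_real_prod)
  have "norm ((\<Prod>m\<in>{1..N}. char_unif_centered (w m)) - (\<Prod>m\<in>{1..N}. complex_of_real (exp (- ((w m)^2/24)))))
      \<le> (\<Sum>m\<in>{1..N}. norm (char_unif_centered (w m) - complex_of_real (exp (- ((w m)^2/24)))))"
    by (rule norm_prod_diff) (auto simp: norm_char_unif_centered norm_of_real)
  also have "\<dots> \<le> (\<Sum>m\<in>{1..N}. \<bar>w m\<bar>^3 / 48 + (w m)^4 / 1152)"
    by (rule sum_mono) (rule char_unif_centered_gaussian)
  finally show ?thesis unfolding char_linear_part gauss unfolding w_def .
qed


section \<open>Characteristic function of the standardised rank sum\<close>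

lemma (in prob_space) char_perturbation:
  fixes L R :: "'a \<Rightarrow> real"
  assumes L: "L \<in> borel_measurable M" and R: "R \<in> borel_measurable M"
    and intR: "integrable M (\<lambda>x. \<bar>R x\<bar>)"
  shows "norm (expectation (\<lambda>x. iexp (t * (L x + R x))) - expectation (\<lambda>x. iexp (t * L x)))
         \<le> \<bar>t\<bar> * expectation (\<lambda>x. \<bar>R x\<bar>)"
proof -
  have h: "(\<lambda>x. iexp (t * x)) \<in> borel_measurable borel"
    by (intro borel_measurable_continuous_onI continuous_intros)
  have "(\<lambda>x. iexp (t * (L x + R x))) \<in> borel_measurable M"
    by (rule measurable_compose[OF borel_measurable_add[OF L R] h])
  then have i1: "integrable M (\<lambda>x. iexp (t * (L x + R x)))"
    by (intro integrable_const_bound[where B=1] AE_I2) (simp_all add: norm_exp_i_times)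
  have "(\<lambda>x. iexp (t * L x)) \<in> borel_measurable M"
    by (rule measurable_compose[OF L h])
  then have i2: "integrable M (\<lambda>x. iexp (t * L x))"
    by (intro integrable_const_bound[where B=1] AE_I2) (simp_all add: norm_exp_i_times)
  have pointwise: "norm (iexp (t * (L x + R x)) - iexp (t * L x)) \<le> \<bar>t\<bar> * \<bar>R x\<bar>" for x
  proof -
    have "iexp (t * (L x + R x)) - iexp (t * L x) = iexp (t * L x) * (iexp (t * R x) - 1)"
      by (simp add: distrib_left algebra_simps exp_add[symmetric])
    then have "norm (iexp (t * (L x + R x)) - iexp (t * L x)) = norm (iexp (t * R x) - 1)"
      by (simp add: norm_mult norm_exp_i_times)
    also have "\<dots> \<le> \<bar>t * R x\<bar>" using iexp_approx1[of "t * R x" 0] by simp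
    finally show ?thesis by (simp add: abs_mult)
  qed
  have "norm (expectation (\<lambda>x. iexp (t * (L x + R x))) - expectation (\<lambda>x. iexp (t * L x)))
      = norm (expectation (\<lambda>x. iexp (t * (L x + R x)) - iexp (t * L x)))"
    using i1 i2 by (simp add: Bochner_Integration.integral_diff)
  also have "\<dots> \<le> expectation (\<lambda>x. norm (iexp (t * (L x + R x)) - iexp (t * L x)))"
    by (rule integral_norm_bound)
  also have "\<dots> \<le> expectation (\<lambda>x. \<bar>t\<bar> * \<bar>R x\<bar>)"
    by (rule integral_mono) (use i1 i2 intR pointwise in auto)
  finally show ?thesis by simp
qed

lemma pbar_bounds:
  assumes N: "N > 0" and c: "\<And>j. j \<in> {1..N} \<Longrightarrow> 0 \<le> c j \<and> c j \<le> 1"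
  shows "0 \<le> pbar c N" "pbar c N \<le> 1"
proof -
  have "0 \<le> (\<Sum>j=1..N. c j)" using c by (intro sum_nonneg) auto
  then show "0 \<le> pbar c N" by (simp add: pbar_def)
  have "(\<Sum>j=1..N. c j) \<le> (\<Sum>j=1..N. 1)" using c by (intro sum_mono) auto
  then show "pbar c N \<le> 1" using N by (simp add: pbar_def divide_le_eq)
qed

lemma linear_part_weights:
  fixes c :: "nat \<Rightarrow> real" and t :: real
  assumes N: "N > 0" and c: "\<And>j. j \<in> {1..N} \<Longrightarrow> 0 \<le> c j \<and> c j \<le> 1"
    and sp: "sigma2 c N > 0"
  defines "s \<equiv> sqrt (sigma2 c N)"
  defines "w \<equiv> \<lambda>m. t * (real N * (c m - pbar c N)) / s"
  shows "(\<Sum>m\<in>{1..N}. (w m)^2) = 12 * t^2 * (real N / (real N + 1))"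
    and "\<And>m. m \<in> {1..N} \<Longrightarrow> \<bar>w m\<bar> \<le> \<bar>t\<bar> * (real N / s)"
proof -
  define D where "D = (\<Sum>j=1..N. (c j - pbar c N)^2)"
  have s: "s > 0" and ss: "s^2 = sigma2 c N" using sp by (simp_all add: s_def)
  have sig: "sigma2 c N = real N * (real N + 1) / 12 * D" by (simp add: sigma2_def D_def)
  have "0 < real N * (real N + 1) / 12" using N by simp
  then have D: "D > 0" using zero_less_mult_pos[of "real N * (real N + 1) / 12" D] sp sig by simp
  have "(\<Sum>m\<in>{1..N}. (w m)^2) = t^2 * real N^2 / s^2 * D"
    by (simp add: w_def D_def power_mult_distrib power_divide sum_distrib_left sum_divide_distrib mult_ac)
  also have "\<dots> = 12 * t^2 * (real N / (real N + 1))"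
    unfolding ss sig using D N by (simp add: divide_simps) (simp add: algebra_simps power2_eq_square)
  finally show "(\<Sum>m\<in>{1..N}. (w m)^2) = 12 * t^2 * (real N / (real N + 1))" .
  fix m assume m: "m \<in> {1..N}"
  have "\<bar>c m - pbar c N\<bar> \<le> 1" using c[OF m] pbar_bounds[where N=N and c=c, OF N c] by auto
  then have "\<bar>t\<bar> * (real N * \<bar>c m - pbar c N\<bar>) \<le> \<bar>t\<bar> * (real N * 1)"
    by (intro mult_left_mono) auto
  then show "\<bar>w m\<bar> \<le> \<bar>t\<bar> * (real N / s)" using s by (simp add: w_def abs_mult divide_right_mono)
qed

lemma cubic_quartic_bound:
  fixes x b :: real
  assumes x: "\<bar>x\<bar> \<le> b"
  shows "\<bar>x\<bar>^3 / 48 + x^4 / 1152 \<le> (b / 48 + b^2 / 1152) * x^2"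
proof -
  have cube: "\<bar>x\<bar>^3 \<le> b * x^2"
    using mult_right_mono[OF x, of "x^2"] by (simp add: power3_eq_cube power2_eq_square)
  have "x^2 \<le> b^2" using power_mono[OF x, of 2] by simp
  then have quart: "x^4 \<le> b^2 * x^2"
    using mult_right_mono[of "x^2" "b^2" "x^2"] by (simp add: power4_eq_xxxx power2_eq_square mult_ac)
  show ?thesis using cube quart by (simp add: field_simps)
qed

text \<open>Hence the linear part, standardised by \<open>\<sigma>\<close>, is asymptotically \<open>N(0, 1)\<close> once \<open>\<beta> \<rightarrow> 0\<close>.\<close>

lemma char_linear_part_standardised:
  fixes c :: "nat \<Rightarrow> real"
  assumes N: "N > 0" and c: "\<And>j. j \<in> {1..N} \<Longrightarrow> 0 \<le> c j \<and> c j \<le> 1"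
    and sp: "sigma2 c N > 0"
  defines "s \<equiv> sqrt (sigma2 c N)"
  defines "\<beta> \<equiv> real N / s"
  shows "norm (integral\<^sup>L (unif_vec N) (\<lambda>u. iexp (t * linear_part N c u / s))
               - complex_of_real (exp (- (t^2 * (real N / (real N + 1))) / 2)))
     \<le> (\<bar>t\<bar> * \<beta> / 48 + t^2 * \<beta>^2 / 1152) * (12 * t^2)"
proof -
  define w where "w m = t * (real N * (c m - pbar c N)) / s" for m
  have wsq: "(\<Sum>m\<in>{1..N}. (w m)^2) = 12 * t^2 * (real N / (real N + 1))"
    using linear_part_weights(1)[where t=t, OF N c sp] unfolding w_def s_def .
  have wb: "\<bar>w m\<bar> \<le> \<bar>t\<bar> * \<beta>" if "m \<in> {1..N}" for m
    using linear_part_weights(2)[where t=t, OF N c sp that] unfolding w_def s_def \<beta>_def .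
  have exponent: "- (t^2 * (real N / (real N + 1))) / 2 = - ((\<Sum>m\<in>{1..N}. (w m)^2) / 24)"
    unfolding wsq by (simp add: field_simps)
  have "norm (integral\<^sup>L (unif_vec N) (\<lambda>u. iexp (t * linear_part N c u / s))
               - complex_of_real (exp (- (t^2 * (real N / (real N + 1))) / 2)))
      \<le> (\<Sum>m\<in>{1..N}. \<bar>w m\<bar>^3 / 48 + (w m)^4 / 1152)"
    unfolding exponent w_def by (rule char_linear_part_gaussian)
  also have "\<dots> \<le> (\<Sum>m\<in>{1..N}. (\<bar>t\<bar> * \<beta> / 48 + (\<bar>t\<bar> * \<beta>)^2 / 1152) * (w m)^2)"
    by (rule sum_mono) (rule cubic_quartic_bound[OF wb])
  also have "\<dots> = (\<bar>t\<bar> * \<beta> / 48 + t^2 * \<beta>^2 / 1152) * (12 * t^2 * (real N / (real N + 1)))"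
    by (simp only: sum_distrib_left[symmetric] wsq power_mult_distrib power2_abs)
  also have "\<dots> \<le> (\<bar>t\<bar> * \<beta> / 48 + t^2 * \<beta>^2 / 1152) * (12 * t^2)"
    using N sp by (intro mult_left_mono mult_right_le_one_le) (auto simp: \<beta>_def s_def)
  finally show ?thesis .
qed

theorem char_standardised_rank_sum:
  fixes c :: "nat \<Rightarrow> real"
  assumes N: "N > 0" and c: "\<And>j. j \<in> {1..N} \<Longrightarrow> 0 \<le> c j \<and> c j \<le> 1"
    and sp: "sigma2 c N > 0"
  defines "s \<equiv> sqrt (sigma2 c N)"
  defines "\<beta> \<equiv> real N / s"
  shows "norm (integral\<^sup>L (rank_law N) (\<lambda>r. iexp (t * (centered c r N / s)))
               - complex_of_real (exp (- (t^2 * (real N / (real N + 1))) / 2)))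
     \<le> 11/4 * \<bar>t\<bar> * \<beta> + (\<bar>t\<bar> * \<beta> / 48 + t^2 * \<beta>^2 / 1152) * (12 * t^2)"
proof -
  interpret P: prob_space "unif_vec N" by (rule prob_space_unif_vec)
  have s: "s > 0" using sp by (simp add: s_def)
  have cabs: "\<And>j. j \<in> {1..N} \<Longrightarrow> \<bar>c j\<bar> \<le> 1" using c by auto
  let ?L = "\<lambda>u. linear_part N c u / s" and ?R = "\<lambda>u. remainder N c u / s"
  have Lm: "?L \<in> borel_measurable (unif_vec N)" by (intro borel_measurable_divide linear_part_measurable) simp
  have Rm: "?R \<in> borel_measurable (unif_vec N)" by (intro borel_measurable_divide remainder_measurable) simp
  have intR: "integrable (unif_vec N) (\<lambda>u. \<bar>?R u\<bar>)"
    using remainder_integrable(1)[where N=N and c=c, OF cabs] by auto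
  have transfer: "integral\<^sup>L (rank_law N) (\<lambda>r. iexp (t * (centered c r N / s)))
      = P.expectation (\<lambda>u. iexp (t * (?L u + ?R u)))"
  proof -
    have "(\<lambda>u. iexp (t * (centered c (rank_vec N u) N / s))) = (\<lambda>u. iexp (t * (?L u + ?R u)))"
      by (simp add: centered_hajek_decomposition add_divide_distrib)
    moreover have "(\<lambda>u. iexp (t * (?L u + ?R u))) \<in> borel_measurable (unif_vec N)"
      using Lm Rm by measurable
    ultimately show ?thesis by (simp add: integral_rank_law)
  qed
  have remainder_effect: "norm (P.expectation (\<lambda>u. iexp (t * (?L u + ?R u))) - P.expectation (\<lambda>u. iexp (t * ?L u)))
      \<le> 11/4 * \<bar>t\<bar> * \<beta>"
  proof -
    have "P.expectation (\<lambda>u. \<bar>?R u\<bar>) = P.expectation (\<lambda>u. \<bar>remainder N c u\<bar>) / s"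
      using s by simp
    also have "\<dots> \<le> 11/4 * real N / s"
      using remainder_abs_moment[where N=N and c=c, OF cabs N] s by (intro divide_right_mono) auto
    finally have "\<bar>t\<bar> * P.expectation (\<lambda>u. \<bar>?R u\<bar>) \<le> \<bar>t\<bar> * (11/4 * real N / s)"
      by (intro mult_left_mono) auto
    then show ?thesis
      using P.char_perturbation[OF Lm Rm intR, of t] by (simp add: \<beta>_def)
  qed
  have "(\<lambda>u. iexp (t * ?L u)) = (\<lambda>u. iexp (t * linear_part N c u / s))" by simp
  then have linear: "norm (P.expectation (\<lambda>u. iexp (t * ?L u))
      - complex_of_real (exp (- (t^2 * (real N / (real N + 1))) / 2)))
      \<le> (\<bar>t\<bar> * \<beta> / 48 + t^2 * \<beta>^2 / 1152) * (12 * t^2)"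
    using char_linear_part_standardised[OF N c sp, of t] unfolding s_def \<beta>_def by simp
  show ?thesis
    unfolding transfer using norm_triangle_le[OF add_mono[OF remainder_effect linear]] by simp
qed


section \<open>Asymptotic normality and the chi-square limit\<close>

lemma sigma2_sample_variance:
  "N > 0 \<Longrightarrow> sigma2 p N = real N * (real N + 1) / 12 * (real N * ((\<Sum>j=1..N. (p j - pbar p N)^2) / real N))"
  by (simp add: sigma2_def)

text \<open>If the sample variance of the weights has a positive limit, then \<open>\<sigma>\<^sub>N\<close> grows like
  \<open>N\<^sup>3\<^sup>/\<^sup>2\<close>, so the ratio \<open>N/\<sigma>\<^sub>N\<close> controlling the error of the normal approximation vanishes.\<close>

lemma standardisation_rate:
  assumes V: "(\<lambda>N. (\<Sum>j=1..N. (p j - pbar p N)^2) / real N) \<longlonglongrightarrow> \<nu>" and \<nu>: "0 < \<nu>"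
  shows "eventually (\<lambda>N. 0 < N \<and> 0 < sigma2 p N) sequentially"
    and "(\<lambda>N. real N / sqrt (sigma2 p N)) \<longlonglongrightarrow> 0"
proof -
  define Vf where "Vf N = (\<Sum>j=1..N. (p j - pbar p N)^2) / real N" for N
  have Vf: "Vf \<longlonglongrightarrow> \<nu>" using V by (simp add: Vf_def[abs_def])
  have good: "eventually (\<lambda>N. 0 < N \<and> 0 < Vf N) sequentially"
    using order_tendstoD(1)[OF Vf \<nu>]
  proof eventually_elim
    case (elim N)
    then show ?case by (cases N) (auto simp: Vf_def)
  qed
  then show "eventually (\<lambda>N. 0 < N \<and> 0 < sigma2 p N) sequentially"
  proof eventually_elim
    case (elim N)
    then have "0 < real N * (real N + 1) / 12 * (real N * Vf N)" by simp
    then show ?case using elim by (simp only: sigma2_sample_variance Vf_def)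
  qed
  have lim: "(\<lambda>N. sqrt (12 * inverse (real (Suc N)) * inverse (Vf N))) \<longlonglongrightarrow> sqrt (12 * 0 * inverse \<nu>)"
    by (intro tendsto_intros LIMSEQ_inverse_real_of_nat Vf) (use \<nu> in simp)
  show "(\<lambda>N. real N / sqrt (sigma2 p N)) \<longlonglongrightarrow> 0"
  proof (rule Lim_transform_eventually)
    show "(\<lambda>N. sqrt (12 * inverse (real (Suc N)) * inverse (Vf N))) \<longlonglongrightarrow> 0"
      using lim by simp
    show "eventually (\<lambda>N. sqrt (12 * inverse (real (Suc N)) * inverse (Vf N)) = real N / sqrt (sigma2 p N)) sequentially"
      using good
    proof eventually_elim
      case (elim N)
      have sg: "sigma2 p N = real N * (real N + 1) / 12 * (real N * Vf N)"
        using elim by (simp add: sigma2_sample_variance Vf_def)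
      have "real N / sqrt (sigma2 p N) = sqrt (real N ^ 2 / sigma2 p N)"
        by (simp add: real_sqrt_divide)
      also have "real N ^ 2 / sigma2 p N = 12 * inverse (real (Suc N)) * inverse (Vf N)"
        unfolding sg using elim by (simp add: divide_simps) (simp add: algebra_simps power2_eq_square)
      finally show ?case by simp
    qed
  qed
qed

lemma rank_law_measurable: "f \<in> borel_measurable (rank_law N)"
  unfolding rank_law_def by simp

lemma real_distribution_rank_law: "real_distribution (distr (rank_law N) borel f)"
proof -
  interpret prob_space "rank_law N" unfolding rank_law_def by (rule prob_space_measure_pmf)
  show ?thesis by (rule real_distribution_distr) (rule rank_law_measurable)
qed

theorem standardised_rank_sum_clt:
  assumes p: "\<forall>j\<ge>1. 0 \<le> p j \<and> p j \<le> 1"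
    and V: "(\<lambda>N. (\<Sum>j=1..N. (p j - pbar p N)^2) / real N) \<longlonglongrightarrow> \<nu>" and \<nu>: "0 < \<nu>"
  shows "weak_conv_m (\<lambda>N. distr (rank_law N) borel (\<lambda>r. centered p r N / sqrt (sigma2 p N)))
           std_normal_distribution"
proof (rule levy_continuity)
  fix t :: real
  define \<beta> where "\<beta> N = real N / sqrt (sigma2 p N)" for N
  define B where "B N = 11/4 * \<bar>t\<bar> * \<beta> N + (\<bar>t\<bar> * \<beta> N / 48 + t^2 * (\<beta> N)^2 / 1152) * (12 * t^2)" for N
  define E where "E N = complex_of_real (exp (- (t^2 * (real N / (real N + 1))) / 2))" for N
  let ?T = "\<lambda>N r. centered p r N / sqrt (sigma2 p N)"
  have B: "B \<longlonglongrightarrow> 0"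
  proof -
    have "B \<longlonglongrightarrow> 11/4 * \<bar>t\<bar> * 0 + (\<bar>t\<bar> * 0 / 48 + t^2 * 0^2 / 1152) * (12 * t^2)"
      unfolding B_def \<beta>_def by (intro tendsto_intros standardisation_rate(2)[OF V \<nu>]) simp_all
    then show ?thesis by simp
  qed
  have E: "E \<longlonglongrightarrow> complex_of_real (exp (- (t^2 * 1) / 2))"
    unfolding E_def using LIMSEQ_n_over_Suc_n[where 'a=real]
    by (intro tendsto_intros) (simp_all add: add.commute)
  have char: "char (distr (rank_law N) borel (?T N)) t = integral\<^sup>L (rank_law N) (\<lambda>r. iexp (t * ?T N r))" for N
    unfolding char_def by (rule integral_distr) (auto intro: rank_law_measurable)
  have "(\<lambda>N. char (distr (rank_law N) borel (?T N)) t - E N) \<longlonglongrightarrow> 0"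
  proof (rule Lim_null_comparison[OF _ B])
    show "eventually (\<lambda>N. norm (char (distr (rank_law N) borel (?T N)) t - E N) \<le> B N) sequentially"
      using standardisation_rate(1)[OF V \<nu>]
    proof eventually_elim
      case (elim N)
      have "\<And>j. j \<in> {1..N} \<Longrightarrow> 0 \<le> p j \<and> p j \<le> 1" using p by auto
      then show ?case
        unfolding char E_def B_def \<beta>_def using char_standardised_rank_sum[of N p] elim by simp
    qed
  qed
  then have "(\<lambda>N. char (distr (rank_law N) borel (?T N)) t) \<longlonglongrightarrow> complex_of_real (exp (- (t^2 * 1) / 2))"
    by (rule Lim_transform[OF E])
  then show "(\<lambda>N. char (distr (rank_law N) borel (?T N)) t) \<longlonglongrightarrow> char std_normal_distribution t"
    by (simp add: char_std_normal_distribution)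
qed (auto intro: real_distribution_rank_law real_dist_normal_dist)

lemma weak_conv_continuous_map:
  assumes M: "\<And>n. real_distribution (M n)" and M': "real_distribution M'"
    and conv: "weak_conv_m M M'" and g: "\<And>x. isCont g x"
  shows "weak_conv_m (\<lambda>n. distr (M n) borel g) (distr M' borel g)"
proof -
  have gm: "g \<in> borel_measurable borel"
    by (intro borel_measurable_continuous_onI continuous_at_imp_continuous_on) (use g in auto)
  have distr: "real_distribution (distr N borel g)" if "real_distribution N" for N
  proof -
    interpret real_distribution N by (rule that)
    show ?thesis by (rule real_distribution_distr) (simp add: gm)
  qed
  show ?thesis
  proof (rule integral_bdd_continuous_conv_imp_weak_conv)
    fix f :: "real \<Rightarrow> real"
    assume fc: "\<And>x. isCont f x" and fb: "\<And>x. \<bar>f x\<bar> \<le> 1"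
    have fm: "f \<in> borel_measurable borel"
      by (intro borel_measurable_continuous_onI continuous_at_imp_continuous_on) (use fc in auto)
    have "(\<lambda>n. integral\<^sup>L (M n) (\<lambda>x. f (g x))) \<longlonglongrightarrow> integral\<^sup>L M' (\<lambda>x. f (g x))"
      by (rule weak_conv_imp_integral_bdd_continuous_conv[OF M M' conv, where B=1])
         (use fb in \<open>auto intro: continuous_at_compose[unfolded o_def, OF g fc]\<close>)
    moreover have "integral\<^sup>L (distr N borel g) f = integral\<^sup>L N (\<lambda>x. f (g x))"
      if "real_distribution N" for N
    proof -
      interpret real_distribution N by (rule that)
      show ?thesis by (rule integral_distr) (simp_all add: gm fm)
    qed
    ultimately show "(\<lambda>n. integral\<^sup>L (distr (M n) borel g) f) \<longlonglongrightarrow> integral\<^sup>L (distr M' borel g) f"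
      using M M' by simp
  qed (use M M' distr in auto)
qed

lemma Hstar_as_square: "Hstar p r N = (centered p r N / sqrt (sigma2 p N))^2"
proof -
  have "0 \<le> sigma2 p N" unfolding sigma2_def by (intro mult_nonneg_nonneg sum_nonneg) auto
  then show ?thesis unfolding Hstar_def by (simp add: power_divide)
qed

theorem Hstar_chi_square_limit:
  assumes "\<forall>j\<ge>1. 0 \<le> p j \<and> p j \<le> 1"
    and "(\<lambda>N. (\<Sum>j=1..N. (p j - pbar p N)^2) / real N) \<longlonglongrightarrow> \<nu>" and "0 < \<nu>"
  shows "weak_conv_m (\<lambda>N. distr (rank_law N) borel (\<lambda>r. Hstar p r N)) chi2_1"
proof -
  let ?T = "\<lambda>N r. centered p r N / sqrt (sigma2 p N)"
  have "weak_conv_m (\<lambda>N. distr (distr (rank_law N) borel (?T N)) borel (\<lambda>x. x^2))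
          (distr std_normal_distribution borel (\<lambda>x. x^2))"
    by (rule weak_conv_continuous_map[OF real_distribution_rank_law real_dist_normal_dist
          standardised_rank_sum_clt[OF assms]]) simp
  moreover have "distr (distr (rank_law N) borel (?T N)) borel (\<lambda>x. x^2)
      = distr (rank_law N) borel (\<lambda>r. Hstar p r N)" for N
    by (subst distr_distr) (auto simp: comp_def Hstar_as_square intro: rank_law_measurable)
  ultimately show ?thesis unfolding chi2_1_def by simp
qed

text \<open>Under the uniform rank law the statistic computed from the complementary weights has the
  same distribution, since the two statistics agree on every permutation.\<close>

lemma distr_Hstar_complement:
  "distr (rank_law N) borel (\<lambda>r. Hstar (\<lambda>j. 1 - p j) r N) = distr (rank_law N) borel (\<lambda>r. Hstar p r N)"
proof (rule distr_cong_AE)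
  have fin: "finite (perms N)" by (rule finite_permutations) simp
  have ne: "perms N \<noteq> {}" using permutes_id by blast
  have "Hstar (\<lambda>j. 1 - p j) r N = Hstar p r N" if "r \<in> perms N" for r
  proof (rule Hstar_complement)
    show "bij_betw r {1..N} {1..N}" using that by (simp add: permutes_imp_bij)
  qed simp
  then show "AE r in rank_law N. Hstar (\<lambda>j. 1 - p j) r N = Hstar p r N"
    unfolding rank_law_def AE_measure_pmf_iff set_pmf_of_set[OF ne fin] by blast
qed (auto intro: rank_law_measurable)

theorem mainTheorem3:
  shows
  "(\<forall>(N::nat) (p1::nat \<Rightarrow> real) (p2::nat \<Rightarrow> real) (r::nat \<Rightarrow> nat).
      (\<forall>j\<in>{1..N}. 0 \<le> p1 j \<and> p1 j \<le> 1 \<and> 0 \<le> p2 j \<and> p2 j \<le> 1 \<and> p1 j + p2 j = 1)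
      \<and> (\<exists>j\<in>{1..N}. \<exists>j'\<in>{1..N}. p1 j \<noteq> p1 j')
      \<and> bij_betw r {1..N} {1..N}
      \<longrightarrow> centered p1 r N / sqrt (sigma2 p1 N) = - (centered p2 r N / sqrt (sigma2 p2 N))
        \<and> Hstar p1 r N = Hstar p2 r N)
   \<and>
   (\<forall>(p1::nat \<Rightarrow> real) (\<pi>::real) (\<nu>::real).
      (\<forall>j\<ge>1. 0 \<le> p1 j \<and> p1 j \<le> 1)
      \<and> (\<lambda>N. pbar p1 N) \<longlonglongrightarrow> \<pi> \<and> 0 < \<pi> \<and> \<pi> < 1
      \<and> (\<lambda>N. (\<Sum>j=1..N. (p1 j - pbar p1 N)^2) / real N) \<longlonglongrightarrow> \<nu> \<and> 0 < \<nu>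
      \<longrightarrow> weak_conv_m (\<lambda>N. distr (rank_law N) borel (\<lambda>r. Hstar p1 r N)) chi2_1
        \<and> weak_conv_m (\<lambda>N. distr (rank_law N) borel (\<lambda>r. Hstar (\<lambda>j. 1 - p1 j) r N)) chi2_1)"
proof (intro conjI allI impI)
  fix N :: nat and p1 p2 :: "nat \<Rightarrow> real" and r :: "nat \<Rightarrow> nat"
  assume h: "(\<forall>j\<in>{1..N}. 0 \<le> p1 j \<and> p1 j \<le> 1 \<and> 0 \<le> p2 j \<and> p2 j \<le> 1 \<and> p1 j + p2 j = 1)
      \<and> (\<exists>j\<in>{1..N}. \<exists>j'\<in>{1..N}. p1 j \<noteq> p1 j') \<and> bij_betw r {1..N} {1..N}"
  then have comp: "\<And>j. j \<in> {1..N} \<Longrightarrow> p2 j = 1 - p1 j" and r: "bij_betw r {1..N} {1..N}"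
    by force+
  show "centered p1 r N / sqrt (sigma2 p1 N) = - (centered p2 r N / sqrt (sigma2 p2 N))"
    using centered_complement[OF comp r] sigma2_complement[OF comp] by simp
  show "Hstar p1 r N = Hstar p2 r N" using Hstar_complement[OF comp r] by simp
next
  fix p1 :: "nat \<Rightarrow> real" and \<pi> \<nu> :: real
  assume "(\<forall>j\<ge>1. 0 \<le> p1 j \<and> p1 j \<le> 1)
      \<and> (\<lambda>N. pbar p1 N) \<longlonglongrightarrow> \<pi> \<and> 0 < \<pi> \<and> \<pi> < 1
      \<and> (\<lambda>N. (\<Sum>j=1..N. (p1 j - pbar p1 N)^2) / real N) \<longlonglongrightarrow> \<nu> \<and> 0 < \<nu>"
  then have limit: "weak_conv_m (\<lambda>N. distr (rank_law N) borel (\<lambda>r. Hstar p1 r N)) chi2_1"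
    by (intro Hstar_chi_square_limit) auto
  then show "weak_conv_m (\<lambda>N. distr (rank_law N) borel (\<lambda>r. Hstar p1 r N)) chi2_1" .
  show "weak_conv_m (\<lambda>N. distr (rank_law N) borel (\<lambda>r. Hstar (\<lambda>j. 1 - p1 j) r N)) chi2_1"
    unfolding distr_Hstar_complement by (rule limit)
qed

end
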